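(* Let $A$ be a unital associative algebra over $k$ with unit $1$, let $\rho:A\to A$ be linear with curvature $\omega(x,y)=\rho(xy)-\rho(x)\rho(y)$, and suppose that for all $x,y\in A$ $$x\,\omega(1,y)-x\,\omega(1,1)\,y-\omega(x,y)+\omega(x,1)\,y=0.$$ Then: (i) if $\rho(1)=1$, $\rho$ is an algebra homomorphism; (ii) if $\rho(1)=0$, $\rho$ is an Ito derivative.
   Context: $k=\mathbb{R}$ or $\mathbb{C}$. An Ito derivative is a linear map $d:A\to A$ with $d(1)=0$ and $d(xy)=d(x)y+xd(y)+d(x)d(y)$ for all $x,y\in A$. *)

theory Defs
  imports Complex_Main
begin

definition curvature :: "('a::real_algebra_1 \<Rightarrow> 'a) \<Rightarrow> 'a \<Rightarrow> 'a \<Rightarrow> 'a" where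
  "curvature \<rho> x y = \<rho> (x * y) - \<rho> x * \<rho> y"

definition algebra_hom :: "('a::real_algebra_1 \<Rightarrow> 'a) \<Rightarrow> bool" where
  "algebra_hom \<rho> \<longleftrightarrow> linear \<rho> \<and> \<rho> 1 = 1 \<and> (\<forall>x y. \<rho> (x * y) = \<rho> x * \<rho> y)"

definition ito_derivative :: "('a::real_algebra_1 \<Rightarrow> 'a) \<Rightarrow> bool" where
  "ito_derivative d \<longleftrightarrow> linear d \<and> d 1 = 0 \<and>
     (\<forall>x y. d (x * y) = d x * y + x * d y + d x * d y)"

end

theory Submission
  imports Defs
begin

text \<open>The hypothesis expresses the curvature \<open>\<omega>(x, y)\<close> through the curvatures with one
  argument equal to \<open>1\<close>. Those are determined by \<open>\<rho> 1\<close> alone: they all vanish when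
  \<open>\<rho> 1 = 1\<close>, leaving \<open>\<omega> = 0\<close>, while for \<open>\<rho> 1 = 0\<close> one gets \<open>\<omega>(1, y) = \<rho> y\<close>,
  \<open>\<omega>(x, 1) = \<rho> x\<close> and \<open>\<omega>(1, 1) = 0\<close>, so that \<open>\<omega>(x, y) = x \<rho>(y) + \<rho>(x) y\<close>, which is the
  Ito product rule.\<close>

lemma curvature_one_left: "curvature \<rho> 1 y = \<rho> y - \<rho> 1 * \<rho> y"
  by (simp add: curvature_def)

lemma curvature_one_right: "curvature \<rho> x 1 = \<rho> x - \<rho> x * \<rho> 1"
  by (simp add: curvature_def)

lemma curvature_eq_via_unit:
  fixes \<rho> :: "'a::real_algebra_1 \<Rightarrow> 'a"
  assumes "x * curvature \<rho> 1 y - x * curvature \<rho> 1 1 * y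
             - curvature \<rho> x y + curvature \<rho> x 1 * y = 0"
  shows "curvature \<rho> x y = x * curvature \<rho> 1 y - x * curvature \<rho> 1 1 * y + curvature \<rho> x 1 * y"
  using assms by (simp add: algebra_simps)

lemma multiplicative_if_unital:
  fixes \<rho> :: "'a::real_algebra_1 \<Rightarrow> 'a"
  assumes "x * curvature \<rho> 1 y - x * curvature \<rho> 1 1 * y
             - curvature \<rho> x y + curvature \<rho> x 1 * y = 0"
    and "\<rho> 1 = 1"
  shows "\<rho> (x * y) = \<rho> x * \<rho> y"
proof -
  have "curvature \<rho> x y = 0"
    using curvature_eq_via_unit [OF assms(1)] assms(2)
    by (simp add: curvature_one_left curvature_one_right)
  then show ?thesis
    by (simp add: curvature_def)
qed

lemma ito_rule_if_counital:
  fixes \<rho> :: "'a::real_algebra_1 \<Rightarrow> 'a"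
  assumes "x * curvature \<rho> 1 y - x * curvature \<rho> 1 1 * y
             - curvature \<rho> x y + curvature \<rho> x 1 * y = 0"
    and "\<rho> 1 = 0"
  shows "\<rho> (x * y) = \<rho> x * y + x * \<rho> y + \<rho> x * \<rho> y"
proof -
  have "curvature \<rho> x y = x * \<rho> y + \<rho> x * y"
    using curvature_eq_via_unit [OF assms(1)] assms(2)
    by (simp add: curvature_one_left curvature_one_right)
  then show ?thesis
    by (simp add: curvature_def algebra_simps)
qed

theorem mainTheorem5:
  fixes \<rho> :: "'a::real_algebra_1 \<Rightarrow> 'a"
  assumes lin: "linear \<rho>"
    and cond: "\<forall>x y. x * curvature \<rho> 1 y - x * curvature \<rho> 1 1 * y
                     - curvature \<rho> x y + curvature \<rho> x 1 * y = 0"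
  shows "(\<rho> 1 = 1 \<longrightarrow> algebra_hom \<rho>) \<and> (\<rho> 1 = 0 \<longrightarrow> ito_derivative \<rho>)"
proof (intro conjI impI)
  assume unital: "\<rho> 1 = 1"
  have "\<rho> (x * y) = \<rho> x * \<rho> y" for x y
    using multiplicative_if_unital cond unital by blast
  with lin unital show "algebra_hom \<rho>"
    by (simp add: algebra_hom_def)
next
  assume counital: "\<rho> 1 = 0"
  have "\<rho> (x * y) = \<rho> x * y + x * \<rho> y + \<rho> x * \<rho> y" for x y
    using ito_rule_if_counital cond counital by blast
  with lin counital show "ito_derivative \<rho>"
    by (simp add: ito_derivative_def)
qed

end
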